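(* Let $1\le j<n$ with $\gcd(n,j)=1$, $k=n-j$, let $a\in\overline L^\times$, and let $X\in\overline L$ satisfy $X^{q^k-1}=a$. Then the elements $g\in\overline L$ satisfying $$\frac{1}{a}\,g^{q^k}-\frac{1}{a^{q^j}}\,g-a^{q^n-1}+1=0$$ are exactly $$g=\frac{X^{q^n-1}+c}{X^{q^j-1}},\qquad c\in\mathbb{F}_{q^k},$$ and for such $g$ the element $h=-a^{q^n}+a+g^{q^k}$ equals $$h=\frac{X^{q^n-1}+c}{X^{q^n-q^k}}.$$
   Context: $q$ is a prime power and $\overline L$ is an algebraically closed field containing $\mathbb{F}_q$. *)

theory Defs
  imports "HOL-Computational_Algebra.Computational_Algebra"
begin

text \<open>The subfield F_{q^m} of a field of characteristic p (q a power of p),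
  realised as the set of roots of x^(q^m) - x.\<close>
definition Fq_sub :: "nat \<Rightarrow> nat \<Rightarrow> 'a::field set" where
  "Fq_sub q m = {c. c ^ (q ^ m) = c}"

end

theory Submission
  imports Defs
begin

text \<open>
  Write K = q^k, J = q^j and N = q^n = J * K.  The left-hand side of the equation is
  T(g) - a^(N-1) + 1 for the operator T(g) = g^K / a - g / a^J.  In characteristic p the
  map g \<mapsto> g^K is additive, so T is additive as well, and the particular element
  g0 = a^J satisfies T(g0) = a^(N-1) - 1.  Hence the solutions are exactly g0 + ker T.
  Writing a = X^(K-1), an element d lies in ker T iff c = d * X^(J-1) is fixed by the
  K-th power map, i.e. c lies in F_{q^k}; and g0 = X^(N-1) / X^(J-1), which yields the
  stated parametrisation of the solutions.  For the value of h one expands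
  (g0 + c / X^(J-1))^K = a^N + c / X^(N-K) by additivity of the K-th power and uses
  a = X^(N-1) / X^(N-K).
  The argument does not need the coprimality of n and j.
\<close>

lemma frobenius_diff:
  fixes x y :: "'a::comm_ring_1"
  assumes "prime CHAR('a)" and "K = CHAR('a) ^ m"
  shows "(x - y) ^ K = x ^ K - y ^ K"
proof -
  have "(x - y + y) ^ K = (x - y) ^ K + y ^ K"
    using assms by (rule freshmans_dream')
  then show ?thesis by simp
qed

definition twisted_frobenius :: "'a::field \<Rightarrow> nat \<Rightarrow> nat \<Rightarrow> 'a \<Rightarrow> 'a" where
  "twisted_frobenius a J K g = (1 / a) * g ^ K - (1 / a ^ J) * g"

lemma twisted_frobenius_diff:
  fixes a x y :: "'a::field"
  assumes "prime CHAR('a)" and "K = CHAR('a) ^ m"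
  shows "twisted_frobenius a J K (x - y) = twisted_frobenius a J K x - twisted_frobenius a J K y"
  unfolding twisted_frobenius_def frobenius_diff[OF assms] by (simp add: algebra_simps diff_divide_distrib)

lemma twisted_frobenius_particular:
  fixes a :: "'a::field"
  assumes "a \<noteq> 0" and "J \<ge> 1" and "K \<ge> 1"
  shows "twisted_frobenius a J K (a ^ J) = a ^ (J * K - 1) - 1"
proof -
  have "(a ^ J) ^ K = a * a ^ (J * K - 1)"
    using assms(2,3) by (simp flip: power_mult power_Suc)
  then show ?thesis
    using assms(1) by (simp add: twisted_frobenius_def)
qed

lemma twisted_frobenius_kernel:
  fixes X d :: "'a::field"
  assumes "X \<noteq> 0" and "J \<ge> 1" and "K \<ge> 1"
  shows "twisted_frobenius (X ^ (K - 1)) J K d = 0 \<longleftrightarrow> (d * X ^ (J - 1)) ^ K = d * X ^ (J - 1)"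
proof -
  define b B where "b = X ^ (K - 1)" and "B = X ^ (J - 1)"
  have b0: "b \<noteq> 0" and B0: "B \<noteq> 0"
    using assms(1) by (simp_all add: b_def B_def)
  have "(K - 1) + (J - 1) * K = (J - 1) + (K - 1) * J"
    using assms(2,3) by (simp add: algebra_simps)
  then have relation: "b * B ^ K = B * b ^ J"
    unfolding b_def B_def by (metis power_add power_mult)
  have "twisted_frobenius b J K d = 0 \<longleftrightarrow> d ^ K * b ^ J = d * b"
    using b0 by (auto simp: twisted_frobenius_def field_simps)
  also have "\<dots> \<longleftrightarrow> B * (d ^ K * b ^ J) = B * (d * b)"
    using B0 by simp
  also have "\<dots> \<longleftrightarrow> b * (d ^ K * B ^ K) = b * (d * B)"
  proof -
    have lhs: "b * (d ^ K * B ^ K) = B * (d ^ K * b ^ J)"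
      using relation by (metis mult.assoc mult.commute)
    have rhs: "b * (d * B) = B * (d * b)"
      by (simp add: ac_simps)
    show ?thesis
      unfolding lhs rhs ..
  qed
  also have "\<dots> \<longleftrightarrow> (d * B) ^ K = d * B"
    using b0 by (simp add: power_mult_distrib)
  finally show ?thesis
    unfolding b_def B_def .
qed

lemma twisted_frobenius_solutions:
  fixes X g :: "'a::field"
  assumes "prime CHAR('a)" and "K = CHAR('a) ^ m"
    and "X \<noteq> 0" and "J \<ge> 1" and "a = X ^ (K - 1)"
  shows "twisted_frobenius a J K g - a ^ (J * K - 1) + 1 = 0
           \<longleftrightarrow> (\<exists>c. c ^ K = c \<and> g = a ^ J + c / X ^ (J - 1))"
proof -
  have K1: "K \<ge> 1"
    using prime_gt_0_nat[OF assms(1)] assms(2) by simp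
  have B0: "X ^ (J - 1) \<noteq> 0"
    using assms(3) by simp
  have "a \<noteq> 0"
    using assms(3,5) by simp
  then have "twisted_frobenius a J K (a ^ J) = a ^ (J * K - 1) - 1"
    using assms(4) K1 by (rule twisted_frobenius_particular)
  then have "twisted_frobenius a J K g - a ^ (J * K - 1) + 1 = twisted_frobenius a J K (g - a ^ J)"
    by (simp add: twisted_frobenius_diff[OF assms(1,2)])
  also have "\<dots> = 0 \<longleftrightarrow> ((g - a ^ J) * X ^ (J - 1)) ^ K = (g - a ^ J) * X ^ (J - 1)"
    unfolding assms(5) using twisted_frobenius_kernel[OF assms(3,4) K1] .
  also have "\<dots> \<longleftrightarrow> (\<exists>c. c ^ K = c \<and> g = a ^ J + c / X ^ (J - 1))"
  proof
    assume "((g - a ^ J) * X ^ (J - 1)) ^ K = (g - a ^ J) * X ^ (J - 1)"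
    moreover have "g = a ^ J + (g - a ^ J) * X ^ (J - 1) / X ^ (J - 1)"
      using B0 by simp
    ultimately show "\<exists>c. c ^ K = c \<and> g = a ^ J + c / X ^ (J - 1)"
      by blast
  next
    assume "\<exists>c. c ^ K = c \<and> g = a ^ J + c / X ^ (J - 1)"
    then obtain c where "c ^ K = c" and "(g - a ^ J) * X ^ (J - 1) = c"
      using B0 by auto
    then show "((g - a ^ J) * X ^ (J - 1)) ^ K = (g - a ^ J) * X ^ (J - 1)"
      by simp
  qed
  finally show ?thesis .
qed

lemma particular_solution_in_X:
  fixes X :: "'a::field"
  assumes "X \<noteq> 0" and "J \<ge> 1" and "K \<ge> 1"
  shows "X ^ (J * K - 1) / X ^ (J - 1) = (X ^ (K - 1)) ^ J"
proof -
  have "J * K - 1 = (J - 1) + (K - 1) * J"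
    using assms(2,3) by (simp add: algebra_simps)
  then have "X ^ (J * K - 1) = X ^ (J - 1) * (X ^ (K - 1)) ^ J"
    by (simp add: power_add power_mult)
  then show ?thesis
    using assms(1) by simp
qed

lemma twisted_frobenius_h_value:
  fixes X c :: "'a::field"
  assumes "prime CHAR('a)" and "K = CHAR('a) ^ m"
    and "X \<noteq> 0" and "J \<ge> 1" and "a = X ^ (K - 1)" and "c ^ K = c"
  shows "- (a ^ (J * K)) + a + (a ^ J + c / X ^ (J - 1)) ^ K = (X ^ (J * K - 1) + c) / X ^ (J * K - K)"
proof -
  have K1: "K \<ge> 1"
    using prime_gt_0_nat[OF assms(1)] assms(2) by simp
  have "(X ^ (J - 1)) ^ K = X ^ (J * K - K)"
    by (simp flip: power_mult add: algebra_simps)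
  then have expand: "(a ^ J + c / X ^ (J - 1)) ^ K = a ^ (J * K) + c / X ^ (J * K - K)"
    using freshmans_dream'[OF assms(1,2)] assms(6)
    by (simp add: power_divide power_mult)
  have "J * K - 1 = (J * K - K) + (K - 1)"
    using assms(4) K1 by (simp add: algebra_simps)
  then have "a = X ^ (J * K - 1) / X ^ (J * K - K)"
    using assms(3,5) by (simp add: power_add)
  then show ?thesis
    unfolding expand by (simp add: add_divide_distrib)
qed

theorem proposition4p2:
  fixes p e q n j k :: nat and a X :: "'a::alg_closed_field"
  assumes "prime p" and "e > 0" and "q = p ^ e" and "CHAR('a) = p"
    and "1 \<le> j" and "j < n" and "coprime n j" and "k = n - j"
    and "a \<noteq> 0" and "X ^ (q ^ k - 1) = a"
  shows "(\<forall>g::'a. (1 / a) * g ^ (q ^ k) - (1 / a ^ (q ^ j)) * g - a ^ (q ^ n - 1) + 1 = 0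
            \<longleftrightarrow> (\<exists>c \<in> Fq_sub q k. g = (X ^ (q ^ n - 1) + c) / X ^ (q ^ j - 1)))
       \<and> (\<forall>c \<in> Fq_sub q k.
            - (a ^ (q ^ n)) + a + ((X ^ (q ^ n - 1) + c) / X ^ (q ^ j - 1)) ^ (q ^ k)
              = (X ^ (q ^ n - 1) + c) / X ^ (q ^ n - q ^ k))"
proof -
  define K J where "K = q ^ k" and "J = q ^ j"
  have char: "prime CHAR('a)" and K_char: "K = CHAR('a) ^ (e * k)"
    using assms(1,3,4) by (simp_all add: K_def power_mult)
  have N: "q ^ n = J * K"
    using assms(6,8) by (simp add: J_def K_def flip: power_add)
  have "p ^ 1 \<le> p ^ e"
    using prime_ge_2_nat[OF assms(1)] assms(2) by (intro power_increasing) auto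
  then have q2: "q \<ge> 2"
    using prime_ge_2_nat[OF assms(1)] assms(3) by simp
  have J1: "J \<ge> 1"
    using q2 by (simp add: J_def)
  have "q ^ 1 \<le> q ^ k"
    using q2 assms(6,8) by (intro power_increasing) auto
  then have K2: "K \<ge> 2"
    using q2 by (simp add: K_def)
  then have K1: "K \<ge> 1"
    by simp
  have X0: "X \<noteq> 0"
    using assms(9,10) K2 by (auto simp: K_def)
  have a: "a = X ^ (K - 1)"
    using assms(10) by (simp add: K_def)
  have shift: "(X ^ (J * K - 1) + c) / X ^ (J - 1) = a ^ J + c / X ^ (J - 1)" for c
    using particular_solution_in_X[OF X0 J1 K1] by (simp add: a add_divide_distrib)
  have Fq: "Fq_sub q k = {c. c ^ K = c}"
    by (simp add: Fq_sub_def K_def)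
  show ?thesis
    unfolding N K_def[symmetric] J_def[symmetric] shift Fq
    using twisted_frobenius_solutions[OF char K_char X0 J1 a]
      twisted_frobenius_h_value[OF char K_char X0 J1 a]
    by (simp add: twisted_frobenius_def)
qed

end
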